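(* Let $\lambda=[2,2,2,2]$ and $\mu=[4,1,1,1,1,1,1,1,1]$ (one entry $4$ and eight entries $1$). Then $\lambda$ stably embeds into $\mu$ (indeed $\lambda\times\nu\hookrightarrow\mu\times\nu$ for $\nu=[2,1,1]$), but $\mu$ does not supermajorize $\lambda$ and $\lambda$ does not embed into $\mu$.
   Context: Partitions are finite nonincreasing sequences of positive integers. The product $\lambda\times\nu$ is the partition of all products $\lambda_i\nu_j$, reordered nonincreasingly. $\lambda=[\lambda_1,\ldots,\lambda_m]$ embeds into $\mu=[\mu_1,\ldots,\mu_n]$, written $\lambda\hookrightarrow\mu$, if there is a map $\varphi:\{1,\ldots,m\}\to\{1,\ldots,n\}$ with $\sum_{i\in\varphi^{-1}(j)}\lambda_i\le\mu_j$ for all $j$. $\lambda$ stably embeds into $\mu$ if there is a partition $\nu$ with $\lambda\times\nu\hookrightarrow\mu\times\nu$. $\mu$ supermajorizes $\lambda$ (written $\lambda\preccurlyeq_S\mu$) if for every $x\in\mathbb N$, $\sum_{\lambda_i\ge x}\lambda_i\le\sum_{\mu_j\ge x}\mu_j$. *)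

theory Defs
  imports Main
begin

definition is_partition :: "nat list \<Rightarrow> bool" where
  "is_partition l \<longleftrightarrow> sorted_wrt (\<ge>) l \<and> (\<forall>a\<in>set l. 0 < a)"

definition pprod :: "nat list \<Rightarrow> nat list \<Rightarrow> nat list" where
  "pprod l n = rev (sort [a * b. a \<leftarrow> l, b \<leftarrow> n])"

definition embeds :: "nat list \<Rightarrow> nat list \<Rightarrow> bool" where
  "embeds l m \<longleftrightarrow> (\<exists>\<phi> :: nat \<Rightarrow> nat.
      (\<forall>i < length l. \<phi> i < length m) \<and>
      (\<forall>j < length m. (\<Sum>i \<in> {i. i < length l \<and> \<phi> i = j}. l ! i) \<le> m ! j))"

definition stably_embeds :: "nat list \<Rightarrow> nat list \<Rightarrow> bool" where
  "stably_embeds l m \<longleftrightarrow> (\<exists>\<nu>. is_partition \<nu> \<and> \<nu> \<noteq> [] \<and> embeds (pprod l \<nu>) (pprod m \<nu>))"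

definition supermaj :: "nat list \<Rightarrow> nat list \<Rightarrow> bool" where
  "supermaj l m \<longleftrightarrow> (\<forall>x::nat. sum_list (filter (\<lambda>a. x \<le> a) l) \<le> sum_list (filter (\<lambda>a. x \<le> a) m))"

end

theory Submission
  imports Defs
begin

text \<open>Embedding implies supermajorization, because a part of \<open>\<lambda>\<close> of size at least \<open>x\<close>
  can only be placed into a part of \<open>\<mu>\<close> of size at least \<open>x\<close>. At \<open>x = 2\<close> the parts of
  \<open>\<lambda>\<close> weigh 8 but those of \<open>\<mu>\<close> only 4, so \<open>\<lambda>\<close> neither embeds into nor is
  supermajorized by \<open>\<mu>\<close>. With \<open>\<nu> = [2,1,1]\<close>, however, \<open>\<lambda>\<times>\<nu> = [4,4,4,4,2,...,2]\<close>
  and \<open>\<mu>\<times>\<nu> = [8,4,4,2,...,2,1,...,1]\<close> (eight 2s each): two 4s fit into the 8 and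
  the remaining parts are matched one to one.\<close>

lemma sum_list_filter_conv_sum_nth:
  "sum_list (filter P xs) = (\<Sum>i | i < length xs \<and> P (xs ! i). xs ! i)"
proof -
  have "sum_list (filter P xs) = sum_list (map (\<lambda>x. if P x then x else 0) xs)"
    using sum_list_map_filter'[of "\<lambda>x. x" P xs] by simp
  also have "\<dots> = (\<Sum>i<length xs. if P (xs ! i) then xs ! i else 0)"
    by (simp add: sum_list_sum_nth atLeast0LessThan)
  also have "\<dots> = (\<Sum>i | i < length xs \<and> P (xs ! i). xs ! i)"
    by (simp add: sum.If_cases Collect_conj_eq lessThan_def Int_commute)
  finally show ?thesis .
qed

lemma embeds_Nil: "embeds [] m"
  by (simp add: embeds_def)

lemma embeds_singleton_right:
  assumes "sum_list l \<le> c"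
  shows "embeds l [c]"
  unfolding embeds_def
proof (intro exI[of _ "\<lambda>_. 0"] conjI allI impI)
  fix j assume "j < length [c]"
  then show "(\<Sum>i | i < length l \<and> 0 = j. l ! i) \<le> [c] ! j"
    using assms by (simp add: sum_list_sum_nth atLeast0LessThan lessThan_def)
qed simp

lemma embeds_append:
  assumes "embeds l1 m1" and "embeds l2 m2"
  shows "embeds (l1 @ l2) (m1 @ m2)"
proof -
  obtain \<phi>1 where range1: "\<forall>i < length l1. \<phi>1 i < length m1"
    and load1: "\<forall>j < length m1. (\<Sum>i | i < length l1 \<and> \<phi>1 i = j. l1 ! i) \<le> m1 ! j"
    using assms(1) unfolding embeds_def by blast
  obtain \<phi>2 where range2: "\<forall>i < length l2. \<phi>2 i < length m2"
    and load2: "\<forall>j < length m2. (\<Sum>i | i < length l2 \<and> \<phi>2 i = j. l2 ! i) \<le> m2 ! j"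
    using assms(2) unfolding embeds_def by blast
  define \<phi> where "\<phi> i = (if i < length l1 then \<phi>1 i else length m1 + \<phi>2 (i - length l1))" for i
  have "(\<Sum>i | i < length (l1 @ l2) \<and> \<phi> i = j. (l1 @ l2) ! i) \<le> (m1 @ m2) ! j"
    if "j < length (m1 @ m2)" for j
  proof (cases "j < length m1")
    case True
    have "{i. i < length (l1 @ l2) \<and> \<phi> i = j} = {i. i < length l1 \<and> \<phi>1 i = j}"
      using True by (auto simp: \<phi>_def)
    then show ?thesis
      using True load1 by (simp add: nth_append)
  next
    case False
    let ?j = "j - length m1"
    have "{i. i < length (l1 @ l2) \<and> \<phi> i = j}
        = (+) (length l1) ` {i. i < length l2 \<and> \<phi>2 i = ?j}"
    proof
      show "{i. i < length (l1 @ l2) \<and> \<phi> i = j} \<subseteq> (+) (length l1) ` {i. i < length l2 \<and> \<phi>2 i = ?j}"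
      proof
        fix i assume i: "i \<in> {i. i < length (l1 @ l2) \<and> \<phi> i = j}"
        then have "\<not> i < length l1"
          using False range1 by (auto simp: \<phi>_def)
        then show "i \<in> (+) (length l1) ` {i. i < length l2 \<and> \<phi>2 i = ?j}"
          using i by (auto simp: \<phi>_def image_iff intro!: exI[of _ "i - length l1"])
      qed
    qed (use False in \<open>auto simp: \<phi>_def\<close>)
    then show ?thesis
      using False that load2 by (simp add: sum.reindex nth_append)
  qed
  moreover have "\<phi> i < length (m1 @ m2)" if "i < length (l1 @ l2)" for i
    using that range1 range2[rule_format, of "i - length l1"] by (auto simp: \<phi>_def)
  ultimately show ?thesis
    unfolding embeds_def by blast
qed

lemma embeds_Cons:
  assumes "a \<le> c" and "embeds l m"
  shows "embeds (a # l) (c # m)"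
  using embeds_append[OF embeds_singleton_right[of "[a]" c] assms(2)] assms(1) by simp

lemma embeds_imp_supermaj:
  assumes "embeds l m"
  shows "supermaj l m"
  unfolding supermaj_def sum_list_filter_conv_sum_nth
proof
  fix x :: nat
  obtain \<phi> where range: "\<forall>i < length l. \<phi> i < length m"
    and load: "\<forall>j < length m. (\<Sum>i | i < length l \<and> \<phi> i = j. l ! i) \<le> m ! j"
    using assms unfolding embeds_def by blast
  let ?L = "{i. i < length l \<and> x \<le> l ! i}" and ?J = "{j. j < length m \<and> x \<le> m ! j}"
  have part_le: "l ! i \<le> m ! \<phi> i" if "i < length l" for i
  proof -
    have "l ! i \<le> (\<Sum>k | k < length l \<and> \<phi> k = \<phi> i. l ! k)"
      by (rule member_le_sum) (use that in auto)
    also have "\<dots> \<le> m ! \<phi> i"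
      using load range that by blast
    finally show ?thesis .
  qed
  have "\<phi> ` ?L \<subseteq> ?J"
    using range part_le by (force intro: order_trans)
  then have "(\<Sum>i\<in>?L. l ! i) = (\<Sum>j\<in>?J. \<Sum>i | i \<in> ?L \<and> \<phi> i = j. l ! i)"
    using sum.group[of ?L ?J \<phi> "\<lambda>i. l ! i"] by simp
  also have "\<dots> \<le> (\<Sum>j\<in>?J. m ! j)"
  proof (rule sum_mono)
    fix j assume "j \<in> ?J"
    have "(\<Sum>i | i \<in> ?L \<and> \<phi> i = j. l ! i) \<le> (\<Sum>i | i < length l \<and> \<phi> i = j. l ! i)"
      by (rule sum_mono2) auto
    also have "\<dots> \<le> m ! j"
      using load \<open>j \<in> ?J\<close> by blast
    finally show "(\<Sum>i | i \<in> ?L \<and> \<phi> i = j. l ! i) \<le> m ! j" .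
  qed
  finally show "(\<Sum>i\<in>?L. l ! i) \<le> (\<Sum>j\<in>?J. m ! j)" .
qed

theorem mainTheorem5:
  defines "lam \<equiv> [2,2,2,2] :: nat list"
      and "mu \<equiv> [4,1,1,1,1,1,1,1,1] :: nat list"
  shows "is_partition lam \<and> is_partition mu \<and>
         stably_embeds lam mu \<and>
         embeds (pprod lam [2,1,1]) (pprod mu [2,1,1]) \<and>
         \<not> supermaj lam mu \<and> \<not> embeds lam mu"
proof -
  have "pprod lam [2,1,1] = [4,4] @ [4,4,2,2,2,2,2,2,2,2]"
    and "pprod mu [2,1,1] = [8] @ [4,4,2,2,2,2,2,2,2,2,1,1,1,1,1,1,1,1,1,1,1,1,1,1,1,1]"
    by (simp_all add: lam_def mu_def pprod_def)
  moreover have "embeds [4,4] [8]"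
    by (rule embeds_singleton_right) simp
  moreover have "embeds [4,4,2,2,2,2,2,2,2,2] [4,4,2,2,2,2,2,2,2,2,1,1,1,1,1,1,1,1,1,1,1,1,1,1,1,1]"
    by (intro embeds_Cons embeds_Nil order_refl)
  ultimately have product_embeds: "embeds (pprod lam [2,1,1]) (pprod mu [2,1,1])"
    by (simp only: embeds_append)
  then have "stably_embeds lam mu"
    unfolding stably_embeds_def by (intro exI[of _ "[2,1,1]"]) (simp add: is_partition_def)
  moreover have not_supermaj: "\<not> supermaj lam mu"
    unfolding supermaj_def lam_def mu_def by (auto intro: exI[of _ 2])
  moreover have "\<not> embeds lam mu"
    using not_supermaj embeds_imp_supermaj by blast
  ultimately show ?thesis
    using product_embeds by (simp add: is_partition_def lam_def mu_def)
qed

end
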